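(* Let $K$ be a positive integer and let $m,\ell$ be integers with $0\le \ell\le 2K$ and $m\equiv \ell \pmod 2$. Then, for each choice of sign, \[ C_{m,\ell}^{2K}(q)\pm C_{2K-m,\ell}^{2K}(q) =\frac{q^{s(m,\ell,2K)}}{J_{1}^3}\Big ( f_{K+1,K+1,1}\big(\pm q^{1+\frac{1}{2}(K+\ell)},q^{1+\frac{1}{2}(m+\ell)},q\big) \pm q^{\frac{1}{2}(K-\ell)}f_{K+1,K+1,1}\big(\pm q^{1+\frac{1}{2}(3K-\ell)},q^{1+K+\frac{1}{2}(m-\ell)},q\big)\Big), \] where the sign $\pm$ is the same in all three places.
   Context: Let $q=e^{2\pi i\tau}$ with $\operatorname{Im}\tau>0$, and for real $\alpha$ put $q^{\alpha}:=e^{2\pi i\alpha\tau}$. For $x\in\mathbb{C}^*$, $j(x;q):=\sum_{n\in\mathbb{Z}}(-1)^nq^{n(n-1)/2}x^n$, and $J_1:=\prod_{i\ge1}(1-q^i)$. For positive integers $a,b,c$ and $x,y\in\mathbb{C}^*$, the Hecke-type double-sum is $f_{a,b,c}(x,y,q):=\Big(\sum_{r,s\ge0}-\sum_{r,s<0}\Big)(-1)^{r+s}x^ry^sq^{a\binom{r}{2}+brs+c\binom{s}{2}}$. For a positive integer $N$ and integers $m,\ell$ with $0\le\ell\le N$, $m\equiv\ell\pmod 2$, put $s(m,\ell,N):=-\frac18+\frac{(\ell+1)^2}{4(N+2)}-\frac{m^2}{4N}$. The level-$N$ $A_1^{(1)}$ string function is given by the Hecke-type expression $C_{m,\ell}^{N}(q)=\dfrac{q^{s(m,\ell,N)}}{J_1^3}\,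 f_{1,1+N,1}\big(q^{1+\frac12(m+\ell)},q^{1-\frac12(m-\ell)},q\big)$ (this may be taken as the definition of $C^N_{m,\ell}$). *)

theory Defs
  imports "HOL-Analysis.Analysis"
begin

text \<open>Real powers of the nome: q^alpha := exp(2 pi i alpha tau).\<close>
definition qpow :: "complex \<Rightarrow> real \<Rightarrow> complex" where
  "qpow \<tau> \<alpha> = exp (2 * of_real pi * \<i> * of_real \<alpha> * \<tau>)"

definition nome :: "complex \<Rightarrow> complex" where
  "nome \<tau> = qpow \<tau> 1"

definition J1 :: "complex \<Rightarrow> complex" where
  "J1 \<tau> = (\<Prod>i. 1 - nome \<tau> ^ Suc i)"

text \<open>Hecke-type double sum f_{a,b,c}(x,y,q), q = nome tau;
  q^(a binom(r,2) + b r s + c binom(s,2)) is an integral power of q.\<close>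
definition hecke_term :: "nat \<Rightarrow> nat \<Rightarrow> nat \<Rightarrow> complex \<Rightarrow> complex \<Rightarrow> complex \<Rightarrow> int \<times> int \<Rightarrow> complex" where
  "hecke_term a b c x y \<tau> = (\<lambda>(r, s). (-1) powi (r + s) * x powi r * y powi s *
      qpow \<tau> (of_int (int a * (r * (r - 1) div 2) + int b * r * s + int c * (s * (s - 1) div 2))))"

definition hecke_f :: "nat \<Rightarrow> nat \<Rightarrow> nat \<Rightarrow> complex \<Rightarrow> complex \<Rightarrow> complex \<Rightarrow> complex" where
  "hecke_f a b c x y \<tau> =
     (\<Sum>\<^sub>\<infinity> p \<in> {p :: int \<times> int. fst p \<ge> 0 \<and> snd p \<ge> 0}. hecke_term a b c x y \<tau> p)
   - (\<Sum>\<^sub>\<infinity> p \<in> {p :: int \<times> int. fst p < 0 \<and> snd p < 0}. hecke_term a b c x y \<tau> p)"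

definition s_exp :: "int \<Rightarrow> int \<Rightarrow> nat \<Rightarrow> real" where
  "s_exp m l N = - 1/8 + (of_int l + 1)^2 / (4 * (of_nat N + 2)) - (of_int m)^2 / (4 * of_nat N)"

definition string_fn :: "nat \<Rightarrow> int \<Rightarrow> int \<Rightarrow> complex \<Rightarrow> complex" where
  "string_fn N m l \<tau> = qpow \<tau> (s_exp m l N) / (J1 \<tau>) ^ 3 *
     hecke_f 1 (1 + N) 1 (qpow \<tau> (1 + (of_int m + of_int l) / 2)) (qpow \<tau> (1 - (of_int m - of_int l) / 2)) \<tau>"

end

theory Submission
  imports Defs
begin

(* Write the summation index of f_{K+1,K+1,1} as (R, S). The substitutions (r, s) -> (2s, r - s) and
   (r, s) -> (2r - 1, s - r + 1) carry the double sums of the two string functions onto the even-R and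
   the odd-R part of f_{K+1,K+1,1}, and the involution (r, s) -> (-r - 2s - 1, s) carries the second
   f_{K+1,K+1,1} onto the first one up to sign. Counting with sign how often a lattice point is covered
   by the images of the cones {r, s >= 0} and {r, s < 0}, everything cancels except on the line R = -1,
   where the summand is antisymmetric under a reflection S -> j - S and therefore sums to zero.
   Absolute convergence of the summands on the cones justifies the rearrangements. *)

lemma qpow_add: "qpow t (a + b) = qpow t a * qpow t b"
  unfolding qpow_def by (simp add: exp_add[symmetric] algebra_simps)

lemma qpow_powi: "qpow t a powi n = qpow t (a * of_int n)"
  unfolding qpow_def by (simp add: exp_power_int algebra_simps)

lemma norm_qpow: "norm (qpow t a) = exp (- 2 * pi * Im t * a)"
  unfolding qpow_def by (simp add: norm_exp_eq_Re algebra_simps)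

lemma qpow_nonzero [simp]: "qpow t a \<noteq> 0"
  unfolding qpow_def by simp

lemma of_int_triangular: "real_of_int (r * (r - 1) div 2) = of_int r * (of_int r - 1) / 2"
  by (simp add: real_of_int_div)

lemma triangular_nonneg: "0 \<le> (of_int r :: real) * (of_int r - 1) / 2"
proof -
  have "0 \<le> r * (r - 1)"
    by (cases "r \<le> 0") (auto intro: mult_nonpos_nonpos)
  then show ?thesis
    by (simp add: of_int_triangular[symmetric] del: of_int_mult of_int_diff)
qed

definition hecke_exponent :: "nat \<Rightarrow> nat \<Rightarrow> nat \<Rightarrow> real \<Rightarrow> real \<Rightarrow> int \<Rightarrow> int \<Rightarrow> real" where
  "hecke_exponent a b c \<alpha> \<beta> r s = \<alpha> * of_int r + \<beta> * of_int s + real a * (of_int r * (of_int r - 1) / 2)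
     + real b * of_int r * of_int s + real c * (of_int s * (of_int s - 1) / 2)"

lemma hecke_term_qpow:
  "hecke_term a b c (e * qpow t \<alpha>) (qpow t \<beta>) t (r, s) =
     (-1) powi (r + s) * e powi r * qpow t (hecke_exponent a b c \<alpha> \<beta> r s)"
proof -
  have "qpow t (\<alpha> * of_int r) * qpow t (\<beta> * of_int s) *
      qpow t (of_int (int a * (r * (r - 1) div 2) + int b * r * s + int c * (s * (s - 1) div 2)))
     = qpow t (hecke_exponent a b c \<alpha> \<beta> r s)"
    unfolding qpow_add[symmetric] of_int_add of_int_mult of_int_triangular
    by (simp add: hecke_exponent_def algebra_simps)
  then show ?thesis
    unfolding hecke_term_def by (simp add: power_int_mult_distrib qpow_powi mult_ac)
qed

lemma norm_hecke_term:
  "norm (hecke_term a b c x y t (r, s)) = norm x powi r * norm y powi s *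
     exp (- (2 * pi * Im t) * (real a * (of_int r * (of_int r - 1) / 2) + real b * of_int r * of_int s
        + real c * (of_int s * (of_int s - 1) / 2)))"
  by (simp only: hecke_term_def prod.case norm_mult norm_power_int norm_qpow of_int_add of_int_mult
      of_int_of_nat_eq of_int_triangular) (simp add: algebra_simps)

definition pos_cone :: "(int \<times> int) set" where
  "pos_cone = {p. 0 \<le> fst p \<and> 0 \<le> snd p}"

definition neg_cone :: "(int \<times> int) set" where
  "neg_cone = {p. fst p < 0 \<and> snd p < 0}"

lemma summable_theta_nat:
  fixes u k :: real
  assumes "0 < u" and "0 < k"
  shows "summable (\<lambda>n::nat. u ^ n * exp (- k * (real n * (real n - 1) / 2)))"
proof -
  define f where "f = (\<lambda>n::nat. u ^ n * exp (- k * (real n * (real n - 1) / 2)))"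
  have f_Suc: "f (Suc n) = f n * (u * exp (- k) ^ n)" for n
  proof -
    have exponent: "- k * (real (Suc n) * (real (Suc n) - 1) / 2) = - k * (real n * (real n - 1) / 2) + real n * (- k)"
      by (simp add: field_simps)
    show ?thesis
      unfolding f_def exponent exp_add exp_of_nat_mult by (simp add: mult_ac)
  qed
  have "(\<lambda>n. u * exp (- k) ^ n) \<longlonglongrightarrow> u * 0"
    by (intro tendsto_mult tendsto_const LIMSEQ_power_zero) (use assms in auto)
  then have "\<forall>\<^sub>F n in sequentially. u * exp (- k) ^ n < 1/2"
    by (intro order_tendstoD) auto
  then obtain N where N: "\<And>n. n \<ge> N \<Longrightarrow> u * exp (- k) ^ n < 1/2"
    by (auto simp: eventually_sequentially)
  have "summable f"
  proof (rule summable_ratio_test[of "1/2" N])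
    fix n assume "n \<ge> N"
    have "0 \<le> f n" and "0 \<le> u * exp (- k) ^ n"
      using assms by (simp_all add: f_def)
    moreover have "f n * (u * exp (- k) ^ n) \<le> f n * (1/2)"
      using N[OF \<open>n \<ge> N\<close>] \<open>0 \<le> f n\<close> by (intro mult_left_mono) auto
    ultimately show "norm (f (Suc n)) \<le> 1/2 * norm (f n)"
      by (simp add: f_Suc)
  qed simp
  then show ?thesis
    unfolding f_def .
qed

lemma summable_on_theta_int:
  fixes u k :: real
  assumes "0 < u" and "0 < k"
  shows "(\<lambda>r::int. u powi r * exp (- k * (of_int r * (of_int r - 1) / 2))) summable_on UNIV"
    (is "?g summable_on _")
proof -
  have theta_nat: "(\<lambda>n::nat. v ^ n * exp (- k * (real n * (real n - 1) / 2))) summable_on UNIV"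
    if "0 < v" for v
    using summable_theta_nat[OF that \<open>0 < k\<close>] that
    by (subst summable_on_UNIV_nonneg_real_iff) auto
  have "?g summable_on range int"
    using theta_nat[OF \<open>0 < u\<close>] by (simp add: summable_on_reindex o_def)
  moreover have "?g summable_on range (\<lambda>n. - int n)"
  proof -
    have "?g (- int n) = inverse (u * exp k) ^ n * exp (- k * (real n * (real n - 1) / 2))" for n
    proof -
      have exponent: "- k * (of_int (- int n) * (of_int (- int n) - 1) / 2) = real n * (- k) + - k * (real n * (real n - 1) / 2)"
        by (simp add: field_simps)
      show ?thesis
        unfolding exponent exp_add exp_of_nat_mult
        by (simp add: power_int_minus power_mult_distrib exp_minus power_inverse)
    qed
    then show ?thesis
      using theta_nat[of "inverse (u * exp k)"] assms
      by (subst summable_on_reindex) (auto simp: inj_on_def o_def)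
  qed
  moreover have "range int \<union> range (\<lambda>n. - int n) = UNIV"
  proof (rule sym, rule UNIV_eq_I)
    show "x \<in> range int \<union> range (\<lambda>n. - int n)" for x
      by (cases x rule: int_cases2) auto
  qed
  ultimately show ?thesis
    using summable_on_union[of ?g "range int" "range (\<lambda>n. - int n)"] by simp
qed

lemma summable_on_product_nonneg:
  fixes G H :: "'a \<Rightarrow> real"
  assumes "G summable_on UNIV" and "H summable_on UNIV" and "\<And>x. 0 \<le> G x" and "\<And>y. 0 \<le> H y"
  shows "(\<lambda>p. G (fst p) * H (snd p)) summable_on UNIV"
proof -
  have "(\<lambda>p. G (fst p) * H (snd p)) summable_on UNIV \<times> UNIV"
  proof (rule summable_on_SigmaI)
    show "((\<lambda>y. G (fst (x, y)) * H (snd (x, y))) has_sum G x * infsum H UNIV) UNIV" for x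
      using has_sum_cmult_right[OF has_sum_infsum[OF assms(2)]] by simp
    show "(\<lambda>x. G x * infsum H UNIV) summable_on UNIV"
      using assms(1) by (rule summable_on_cmult_left)
  qed (use assms in auto)
  then show ?thesis
    by simp
qed

lemma norm_hecke_term_le_theta_product:
  assumes "1 \<le> a" and "1 \<le> c" and "0 \<le> r * s" and "0 \<le> Im t"
  defines "k \<equiv> 2 * pi * Im t"
  shows "norm (hecke_term a b c x y t (r, s)) \<le>
    norm x powi r * exp (- k * (of_int r * (of_int r - 1) / 2)) * (norm y powi s * exp (- k * (of_int s * (of_int s - 1) / 2)))"
proof -
  define A where "A = (of_int r * (of_int r - 1) / 2 :: real)"
  define B where "B = (of_int s * (of_int s - 1) / 2 :: real)"
  have "0 \<le> A" "0 \<le> B"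
    unfolding A_def B_def by (rule triangular_nonneg)+
  moreover have "0 \<le> real_of_int r * of_int s"
    using assms(3) by (simp flip: of_int_mult)
  ultimately have "A \<le> real a * A" "B \<le> real c * B" "0 \<le> real b * of_int r * of_int s"
    using assms(1,2) by (simp_all add: mult_le_cancel_right1 mult.assoc)
  then have "k * (A + B) \<le> k * (real a * A + real b * of_int r * of_int s + real c * B)"
    using assms(4) by (intro mult_left_mono) (auto simp: k_def)
  then have "exp (- k * (real a * A + real b * of_int r * of_int s + real c * B)) \<le> exp (- k * A) * exp (- k * B)"
    by (simp add: exp_add[symmetric] algebra_simps)
  then show ?thesis
    unfolding norm_hecke_term k_def[symmetric] A_def[symmetric] B_def[symmetric]
    by (simp add: mult_left_mono mult_ac)
qed

text \<open>On the cones the summand is dominated by a product of two one-variable theta series.\<close>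

lemma hecke_term_summable_on_cones:
  assumes "1 \<le> a" and "1 \<le> c" and "x \<noteq> 0" and "y \<noteq> 0" and "0 < Im t"
  shows "hecke_term a b c x y t summable_on pos_cone \<union> neg_cone"
proof -
  define \<theta> where "\<theta> = (\<lambda>u (r::int). u powi r * exp (- (2 * pi * Im t) * (of_int r * (of_int r - 1) / 2)))"
  have "(\<lambda>p. \<theta> (norm x) (fst p) * \<theta> (norm y) (snd p)) summable_on UNIV"
    unfolding \<theta>_def using assms by (intro summable_on_product_nonneg summable_on_theta_int) auto
  then have "(\<lambda>p. \<theta> (norm x) (fst p) * \<theta> (norm y) (snd p)) summable_on pos_cone \<union> neg_cone"
    by (rule summable_on_subset_banach) simp
  then have "(\<lambda>p. norm (hecke_term a b c x y t p)) summable_on pos_cone \<union> neg_cone"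
  proof (rule Infinite_Sum.abs_summable_on_comparison_test')
    fix p :: "int \<times> int"
    assume "p \<in> pos_cone \<union> neg_cone"
    then obtain r s where "p = (r, s)" and "0 \<le> r * s"
      by (cases p) (auto simp: pos_cone_def neg_cone_def zero_le_mult_iff)
    then show "norm (hecke_term a b c x y t p) \<le> \<theta> (norm x) (fst p) * \<theta> (norm y) (snd p)"
      using norm_hecke_term_le_theta_product[OF assms(1,2)] assms(5) by (simp add: \<theta>_def)
  qed
  then show ?thesis
    by (rule abs_summable_summable)
qed

definition cone_count :: "(int \<times> int \<Rightarrow> int \<times> int) \<Rightarrow> int \<times> int \<Rightarrow> int" where
  "cone_count f p = of_bool (p \<in> f ` pos_cone) - of_bool (p \<in> f ` neg_cone)"

lemma mem_image_iff_pair: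
  "(R, S) \<in> f ` C \<longleftrightarrow> (\<exists>r s. (r, s) \<in> C \<and> f (r, s) = (R, S))"
  by force

lemma mem_cone_images:
  fixes R S :: int
  shows "(R, S) \<in> (\<lambda>(r, s). (2 * s, r - s)) ` pos_cone \<longleftrightarrow> even R \<and> 0 \<le> R \<and> 0 \<le> R + 2 * S"
    and "(R, S) \<in> (\<lambda>(r, s). (2 * s, r - s)) ` neg_cone \<longleftrightarrow> even R \<and> R < 0 \<and> R + 2 * S \<le> -2"
    and "(R, S) \<in> (\<lambda>(r, s). (2 * r - 1, s - r + 1)) ` pos_cone \<longleftrightarrow> odd R \<and> -1 \<le> R \<and> 1 \<le> R + 2 * S"
    and "(R, S) \<in> (\<lambda>(r, s). (2 * r - 1, s - r + 1)) ` neg_cone \<longleftrightarrow> odd R \<and> R \<le> -3 \<and> R + 2 * S \<le> -1"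
    and "(R, S) \<in> (\<lambda>(r, s). (- r - 2 * s - 1, s)) ` pos_cone \<longleftrightarrow> 0 \<le> S \<and> R + 2 * S \<le> -1"
    and "(R, S) \<in> (\<lambda>(r, s). (- r - 2 * s - 1, s)) ` neg_cone \<longleftrightarrow> S < 0 \<and> 0 \<le> R + 2 * S"
  unfolding mem_image_iff_pair by (simp_all add: pos_cone_def neg_cone_def; presburger)+

lemma cone_count_lattice_identity:
  "cone_count (\<lambda>(r, s). (2 * s, r - s)) p + cone_count (\<lambda>(r, s). (2 * r - 1, s - r + 1)) p
     + cone_count (\<lambda>(r, s). (- r - 2 * s - 1, s)) p - cone_count id p = of_bool (fst p = -1)"
proof -
  obtain R S where p: "p = (R, S)" by fastforce
  show ?thesis
  proof (cases "even R")
    case True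
    then obtain k where "R = 2 * k" by (auto elim: evenE)
    then show ?thesis
      unfolding p cone_count_def mem_cone_images by (auto simp: pos_cone_def neg_cone_def; presburger)
  next
    case False
    then obtain k where "R = 2 * k + 1" by (auto elim: oddE)
    then show ?thesis
      unfolding p cone_count_def mem_cone_images by (auto simp: pos_cone_def neg_cone_def; presburger)
  qed
qed

definition cone_sum :: "(int \<times> int \<Rightarrow> 'a::banach) \<Rightarrow> 'a" where
  "cone_sum T = infsum T pos_cone - infsum T neg_cone"

lemma has_sum_diff:
  fixes f g :: "'a \<Rightarrow> 'b::topological_ab_group_add"
  assumes "(f has_sum a) A" and "(g has_sum b) A"
  shows "((\<lambda>x. f x - g x) has_sum (a - b)) A"
proof -
  have "((\<lambda>x. - g x) has_sum - b) A"
    using assms(2) by (simp add: has_sum_uminus)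
  from has_sum_add[OF assms(1) this] show ?thesis
    by simp
qed

lemma has_sum_cone_count:
  fixes T :: "int \<times> int \<Rightarrow> 'a::banach"
  assumes "inj f" and "(T \<circ> f) summable_on pos_cone \<union> neg_cone"
  shows "((\<lambda>p. of_int (cone_count f p) *\<^sub>R T p) has_sum cone_sum (T \<circ> f)) UNIV"
proof -
  have extended: "((\<lambda>p. of_bool (p \<in> f ` C) *\<^sub>R T p) has_sum infsum (T \<circ> f) C) UNIV"
    if "C \<subseteq> pos_cone \<union> neg_cone" for C
  proof -
    have "((T \<circ> f) has_sum infsum (T \<circ> f) C) C"
      using summable_on_subset_banach[OF assms(2) that] by (rule has_sum_infsum)
    then have "(T has_sum infsum (T \<circ> f) C) (f ` C)"
      using assms(1) by (simp add: has_sum_reindex inj_on_subset[of _ UNIV])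
    then show ?thesis
      by (rule has_sum_cong_neutral[THEN iffD1, rotated -1]) auto
  qed
  show ?thesis
    using has_sum_diff[OF extended extended, of pos_cone neg_cone]
    by (simp add: cone_count_def cone_sum_def scaleR_diff_left)
qed

lemma cone_sum_lattice_identity:
  fixes T :: "int \<times> int \<Rightarrow> 'a::banach"
  defines "\<phi> \<equiv> \<lambda>(r, s). (2 * s, r - s)" and "\<psi> \<equiv> \<lambda>(r, s). (2 * r - 1, s - r + 1)"
    and "\<rho> \<equiv> \<lambda>(r, s). (- r - 2 * s - 1, s)"
  assumes "(T \<circ> \<phi>) summable_on pos_cone \<union> neg_cone" and "(T \<circ> \<psi>) summable_on pos_cone \<union> neg_cone"
    and "(T \<circ> \<rho>) summable_on pos_cone \<union> neg_cone" and "T summable_on pos_cone \<union> neg_cone"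
  shows "cone_sum (T \<circ> \<phi>) + cone_sum (T \<circ> \<psi>) + cone_sum (T \<circ> \<rho>) - cone_sum T = infsum T {p. fst p = -1}"
proof -
  have "inj \<phi>" "inj \<psi>" "inj \<rho>"
    by (auto simp: \<phi>_def \<psi>_def \<rho>_def inj_def)
  then have "((\<lambda>p. of_int (cone_count \<phi> p + cone_count \<psi> p + cone_count \<rho> p - cone_count id p) *\<^sub>R T p)
      has_sum (cone_sum (T \<circ> \<phi>) + cone_sum (T \<circ> \<psi>) + cone_sum (T \<circ> \<rho>) - cone_sum (T \<circ> id))) UNIV"
    using assms(4-7) has_sum_cone_count[of id T]
    by (auto simp: scaleR_add_left scaleR_diff_left
        intro!: has_sum_diff has_sum_add has_sum_cone_count)
  then have "((\<lambda>p. of_bool (fst p = -1) *\<^sub>R T p)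
      has_sum (cone_sum (T \<circ> \<phi>) + cone_sum (T \<circ> \<psi>) + cone_sum (T \<circ> \<rho>) - cone_sum T)) UNIV"
    unfolding \<phi>_def \<psi>_def \<rho>_def cone_count_lattice_identity by simp
  then have "(T has_sum (cone_sum (T \<circ> \<phi>) + cone_sum (T \<circ> \<psi>) + cone_sum (T \<circ> \<rho>) - cone_sum T))
      {p. fst p = -1}"
    by (rule has_sum_cong_neutral[THEN iffD2, rotated -1]) auto
  then show ?thesis
    by (rule infsumI[symmetric])
qed

lemma infsum_antisymmetric_reflection:
  fixes f :: "int \<Rightarrow> 'a::real_normed_vector"
  assumes "\<And>s. f (j - s) = - f s"
  shows "infsum f UNIV = 0"
proof -
  have "bij_betw (\<lambda>s. j - s) UNIV UNIV"
    by (rule bij_betwI[of _ _ _ "\<lambda>s. j - s"]) auto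
  then have "infsum f UNIV = infsum (\<lambda>s. f (j - s)) UNIV"
    by (rule infsum_reindex_bij_betw[symmetric])
  also have "\<dots> = - infsum f UNIV"
    by (simp add: assms infsum_uminus)
  finally have "2 *\<^sub>R infsum f UNIV = 0"
    by (metis add.right_inverse scaleR_2)
  then show ?thesis
    by simp
qed

lemma sign_powi:
  fixes \<epsilon> :: "'a::division_ring"
  assumes "\<epsilon> = 1 \<or> \<epsilon> = -1"
  shows "\<epsilon> powi n = (if even n then 1 else \<epsilon>)"
  using assms by (auto simp: power_int_minus_left)

context
  fixes K :: nat and A B :: real and \<epsilon> t :: complex
  assumes sign: "\<epsilon> = 1 \<or> \<epsilon> = -1"
begin

lemma hecke_term_even_substitution:
  "hecke_term (K + 1) (K + 1) 1 (\<epsilon> * qpow t A) (qpow t B) t (2 * s, r - s) =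
   hecke_term 1 (1 + 2 * K) 1 (qpow t B) (qpow t (2 * A - B - real K)) t (r, s)"
proof -
  have "hecke_exponent (K + 1) (K + 1) 1 A B (2 * s) (r - s) = hecke_exponent 1 (1 + 2 * K) 1 B (2 * A - B - K) r s"
    by (simp add: hecke_exponent_def field_simps)
  then show ?thesis
    using hecke_term_qpow[where e = 1] by (simp add: hecke_term_qpow sign_powi[OF sign] sign_powi[of "-1"])
qed

lemma hecke_term_odd_substitution:
  "hecke_term (K + 1) (K + 1) 1 (\<epsilon> * qpow t A) (qpow t B) t (2 * r - 1, s - r + 1) =
   \<epsilon> * qpow t (B - A) * hecke_term 1 (1 + 2 * K) 1 (qpow t (2 * A - B)) (qpow t (B - real K)) t (r, s)"
proof -
  have "hecke_exponent (K + 1) (K + 1) 1 A B (2 * r - 1) (s - r + 1) = (B - A) + hecke_exponent 1 (1 + 2 * K) 1 (2 * A - B) (B - K) r s"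
    by (simp add: hecke_exponent_def field_simps)
  then show ?thesis
    using hecke_term_qpow[where e = 1] by (simp add: hecke_term_qpow qpow_add sign_powi[OF sign] sign_powi[of "-1"])
qed

lemma hecke_term_reflection:
  "hecke_term (K + 1) (K + 1) 1 (\<epsilon> * qpow t A) (qpow t B) t (- r - 2 * s - 1, s) =
   - (\<epsilon> * qpow t (real K + 1 - A) *
      hecke_term (K + 1) (K + 1) 1 (\<epsilon> * qpow t (2 * real K + 2 - A)) (qpow t (B + 2 * real K + 2 - 2 * A)) t (r, s))"
proof -
  have "hecke_exponent (K + 1) (K + 1) 1 A B (- r - 2 * s - 1) s =
      (real K + 1 - A) + hecke_exponent (K + 1) (K + 1) 1 (2 * real K + 2 - A) (B + 2 * real K + 2 - 2 * A) r s"
    by (simp add: hecke_exponent_def field_simps)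
  then show ?thesis
    using sign by (auto simp: hecke_term_qpow qpow_add sign_powi[OF sign] sign_powi[of "-1"])
qed

lemma hecke_term_line_antisymmetric:
  fixes j S :: int
  assumes "odd j" and "2 * B = 2 * real K + 3 - of_int j"
  shows "hecke_term (K + 1) (K + 1) 1 (\<epsilon> * qpow t A) (qpow t B) t (-1, j - S) =
    - hecke_term (K + 1) (K + 1) 1 (\<epsilon> * qpow t A) (qpow t B) t (-1, S)"
proof -
  have "hecke_exponent (K + 1) (K + 1) 1 A B (-1) (j - S) - hecke_exponent (K + 1) (K + 1) 1 A B (-1) S
      = (of_int j - 2 * of_int S) * (2 * B - 2 * real K - 3 + of_int j) / 2"
    by (simp add: hecke_exponent_def field_simps)
  then have "hecke_exponent (K + 1) (K + 1) 1 A B (-1) (j - S) = hecke_exponent (K + 1) (K + 1) 1 A B (-1) S"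
    using assms(2) by simp
  then show ?thesis
    using assms(1) by (simp add: hecke_term_qpow sign_powi[OF sign] sign_powi[of "-1"])
qed

end

lemma hecke_f_eq_cone_sum: "hecke_f a b c x y t = cone_sum (hecke_term a b c x y t)"
  by (simp add: hecke_f_def cone_sum_def pos_cone_def neg_cone_def)

theorem hecke_f_parity_split:
  fixes K :: nat and A B :: real and j :: int and \<epsilon> t :: complex
  assumes "0 < Im t" and sign: "\<epsilon> = 1 \<or> \<epsilon> = -1" and "odd j" and "2 * B = 2 * real K + 3 - of_int j"
  shows "hecke_f 1 (1 + 2 * K) 1 (qpow t B) (qpow t (2 * A - B - real K)) t
      + \<epsilon> * qpow t (B - A) * hecke_f 1 (1 + 2 * K) 1 (qpow t (2 * A - B)) (qpow t (B - real K)) t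
    = hecke_f (K + 1) (K + 1) 1 (\<epsilon> * qpow t A) (qpow t B) t
      + \<epsilon> * qpow t (real K + 1 - A) *
        hecke_f (K + 1) (K + 1) 1 (\<epsilon> * qpow t (2 * real K + 2 - A)) (qpow t (B + 2 * real K + 2 - 2 * A)) t"
proof -
  define T where "T = hecke_term (K + 1) (K + 1) 1 (\<epsilon> * qpow t A) (qpow t B) t"
  define L1 where "L1 = hecke_term 1 (1 + 2 * K) 1 (qpow t B) (qpow t (2 * A - B - real K)) t"
  define L2 where "L2 = hecke_term 1 (1 + 2 * K) 1 (qpow t (2 * A - B)) (qpow t (B - real K)) t"
  define R where "R = hecke_term (K + 1) (K + 1) 1 (\<epsilon> * qpow t (2 * real K + 2 - A)) (qpow t (B + 2 * real K + 2 - 2 * A)) t"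
  define c2 where "c2 = \<epsilon> * qpow t (B - A)"
  define c3 where "c3 = \<epsilon> * qpow t (real K + 1 - A)"
  have even: "T \<circ> (\<lambda>(r, s). (2 * s, r - s)) = L1"
    by (simp add: fun_eq_iff T_def L1_def hecke_term_even_substitution[OF sign, simplified])
  have odd: "T \<circ> (\<lambda>(r, s). (2 * r - 1, s - r + 1)) = (\<lambda>p. c2 * L2 p)"
    by (simp add: fun_eq_iff T_def L2_def c2_def hecke_term_odd_substitution[OF sign, simplified])
  have reflection: "T \<circ> (\<lambda>(r, s). (- r - 2 * s - 1, s)) = (\<lambda>p. - (c3 * R p))"
    by (simp add: fun_eq_iff T_def R_def c3_def hecke_term_reflection[OF sign, simplified])
  have "\<epsilon> \<noteq> 0"
    using sign by auto
  then have summable: "T summable_on pos_cone \<union> neg_cone" "L1 summable_on pos_cone \<union> neg_cone"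
      "L2 summable_on pos_cone \<union> neg_cone" "R summable_on pos_cone \<union> neg_cone"
    unfolding T_def L1_def L2_def R_def using \<open>0 < Im t\<close>
    by (auto intro!: hecke_term_summable_on_cones)
  have "infsum T {p. fst p = -1} = infsum (\<lambda>S. T (-1, S)) UNIV"
    by (rule infsum_reindex_bij_betw[symmetric]) (auto simp: bij_betw_def inj_def image_def)
  also have "\<dots> = 0"
    by (rule infsum_antisymmetric_reflection[of _ j])
      (simp add: T_def hecke_term_line_antisymmetric[OF sign assms(3,4), simplified])
  finally have line: "infsum T {p. fst p = -1} = 0" .
  have "cone_sum (T \<circ> (\<lambda>(r, s). (2 * s, r - s))) + cone_sum (T \<circ> (\<lambda>(r, s). (2 * r - 1, s - r + 1)))
      + cone_sum (T \<circ> (\<lambda>(r, s). (- r - 2 * s - 1, s))) - cone_sum T = infsum T {p. fst p = -1}"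
    by (rule cone_sum_lattice_identity)
      (use summable in \<open>simp_all add: even odd reflection summable_on_cmult_right summable_on_uminus\<close>)
  then have "cone_sum L1 + c2 * cone_sum L2 - c3 * cone_sum R - cone_sum T = 0"
    unfolding even odd reflection line by (simp add: cone_sum_def infsum_cmult_right' infsum_uminus algebra_simps)
  then show ?thesis
    by (simp add: hecke_f_eq_cone_sum T_def L1_def L2_def R_def c2_def c3_def algebra_simps)
qed

lemma s_exp_reflection:
  assumes "0 < K"
  shows "s_exp (2 * int K - m) l (2 * K) = s_exp m l (2 * K) + (of_int m - real K) / 2"
proof -
  have square: "(of_int (2 * int K - m))\<^sup>2 / (4 * real (2 * K)) = (of_int m)\<^sup>2 / (4 * real (2 * K)) + (real K - of_int m) / 2"
    using assms by (simp add: field_simps power2_eq_square)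
  then show ?thesis
    unfolding s_exp_def square by (simp add: field_simps)
qed

theorem theorem1p1:
  fixes K :: nat and m l :: int and \<tau> \<epsilon> :: complex
  assumes "Im \<tau> > 0" and "K > 0" and "0 \<le> l" and "l \<le> 2 * int K" and "even (m - l)"
    and "\<epsilon> = 1 \<or> \<epsilon> = -1"
  shows "string_fn (2 * K) m l \<tau> + \<epsilon> * string_fn (2 * K) (2 * int K - m) l \<tau> =
    qpow \<tau> (s_exp m l (2 * K)) / (J1 \<tau>) ^ 3 *
      (hecke_f (K + 1) (K + 1) 1 (\<epsilon> * qpow \<tau> (1 + (of_nat K + of_int l) / 2))
                                  (qpow \<tau> (1 + (of_int m + of_int l) / 2)) \<tau>
       + \<epsilon> * qpow \<tau> ((of_nat K - of_int l) / 2) *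
         hecke_f (K + 1) (K + 1) 1 (\<epsilon> * qpow \<tau> (1 + (3 * of_nat K - of_int l) / 2))
                                  (qpow \<tau> (1 + of_nat K + (of_int m - of_int l) / 2)) \<tau>)"
proof -
  define A where "A = 1 + (of_nat K + of_int l) / (2 :: real)"
  define B where "B = 1 + (of_int m + of_int l) / (2 :: real)"
  have odd_j: "odd (1 - (m + l) + 2 * int K)"
    using \<open>even (m - l)\<close> by presburger
  have B_j: "2 * B = 2 * real K + 3 - of_int (1 - (m + l) + 2 * int K)"
    by (simp add: B_def)
  note split = hecke_f_parity_split[OF \<open>Im \<tau> > 0\<close> \<open>\<epsilon> = 1 \<or> \<epsilon> = -1\<close> odd_j B_j, where A = A]
  have exponents: "2 * A - B - real K = 1 - (of_int m - of_int l) / 2" "B - A = (of_int m - real K) / 2"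
    "2 * A - B = 1 + (of_int (2 * int K - m) + of_int l) / 2" "B - real K = 1 - (of_int (2 * int K - m) - of_int l) / 2"
    "real K + 1 - A = (of_nat K - of_int l) / 2" "2 * real K + 2 - A = 1 + (3 * of_nat K - of_int l) / 2"
    "B + 2 * real K + 2 - 2 * A = 1 + of_nat K + (of_int m - of_int l) / 2"
    by (simp_all add: A_def B_def field_simps)
  have prefactor: "qpow \<tau> (s_exp (2 * int K - m) l (2 * K)) = qpow \<tau> (s_exp m l (2 * K)) * qpow \<tau> ((of_int m - real K) / 2)"
    by (simp add: s_exp_reflection[OF \<open>K > 0\<close>] qpow_add)
  have "string_fn (2 * K) m l \<tau> + \<epsilon> * string_fn (2 * K) (2 * int K - m) l \<tau> =
    qpow \<tau> (s_exp m l (2 * K)) / (J1 \<tau>) ^ 3 *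
      (hecke_f 1 (1 + 2 * K) 1 (qpow \<tau> B) (qpow \<tau> (2 * A - B - real K)) \<tau>
      + \<epsilon> * qpow \<tau> (B - A) * hecke_f 1 (1 + 2 * K) 1 (qpow \<tau> (2 * A - B)) (qpow \<tau> (B - real K)) \<tau>)"
    unfolding exponents(1) unfolding exponents(2-) unfolding string_fn_def prefactor B_def
    by (simp add: algebra_simps)
  then show ?thesis
    unfolding split unfolding exponents(1) unfolding exponents(2-) unfolding A_def B_def .
qed

end
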